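(* Let $R_1$ and $R_2$ be finite commutative principal ideal rings with unity, and let $R=R_1\times R_2$. Suppose $\operatorname{diam}(\Gamma(R_1))=\operatorname{diam}(\Gamma(R_2))=1$. Then $\overline{\Gamma(R)}$ is not a divisor graph.
   Context: For a commutative ring $S$ with unity, $Z(S)$ denotes its set of zero divisors. The zero divisor graph $\Gamma(S)$ is the simple graph with vertex set $Z(S)\setminus\{0\}$, distinct $a,b$ adjacent iff $ab=0$; its complement $\overline{\Gamma(S)}$ has the same vertex set with distinct $a,b$ adjacent iff $ab\neq 0$. The diameter of a graph is the maximum distance (number of edges in a shortest path) between pairs of vertices. For a nonempty set $T$ of positive integers, the divisor graph $G(T)$ has vertex set $T$, with distinct $i,j$ adjacent iff $i\mid j$ or $j\mid i$; a graph is a divisor graph if it is isomorphic to some $G(T)$. *)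

theory Defs
  imports "HOL-Algebra.Algebra" "HOL-Library.Extended_Nat"
begin

definition principal_ideal_ring :: "('a, 'm) ring_scheme \<Rightarrow> bool" where
  "principal_ideal_ring R \<longleftrightarrow> cring R \<and> (\<forall>I. ideal I R \<longrightarrow> principalideal I R)"

definition zero_divisors :: "('a, 'm) ring_scheme \<Rightarrow> 'a set" where
  "zero_divisors R = {a \<in> carrier R. \<exists>b \<in> carrier R. b \<noteq> \<zero>\<^bsub>R\<^esub> \<and> a \<otimes>\<^bsub>R\<^esub> b = \<zero>\<^bsub>R\<^esub>}"

definition zdg_vertices :: "('a, 'm) ring_scheme \<Rightarrow> 'a set" where
  "zdg_vertices R = zero_divisors R - {\<zero>\<^bsub>R\<^esub>}"

definition zdg_adj :: "('a, 'm) ring_scheme \<Rightarrow> 'a \<Rightarrow> 'a \<Rightarrow> bool" where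
  "zdg_adj R a b \<longleftrightarrow> a \<noteq> b \<and> a \<otimes>\<^bsub>R\<^esub> b = \<zero>\<^bsub>R\<^esub>"

definition zdg_compl_adj :: "('a, 'm) ring_scheme \<Rightarrow> 'a \<Rightarrow> 'a \<Rightarrow> bool" where
  "zdg_compl_adj R a b \<longleftrightarrow> a \<noteq> b \<and> a \<otimes>\<^bsub>R\<^esub> b \<noteq> \<zero>\<^bsub>R\<^esub>"

definition walk_len :: "'v set \<Rightarrow> ('v \<Rightarrow> 'v \<Rightarrow> bool) \<Rightarrow> 'v \<Rightarrow> 'v \<Rightarrow> nat \<Rightarrow> bool" where
  "walk_len V E a b n \<longleftrightarrow> (\<exists>p :: nat \<Rightarrow> 'v. p 0 = a \<and> p n = b \<and> (\<forall>i\<le>n. p i \<in> V)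
      \<and> (\<forall>i<n. E (p i) (p (Suc i))))"

text \<open>Distance (infinite if no path).\<close>
definition graph_dist :: "'v set \<Rightarrow> ('v \<Rightarrow> 'v \<Rightarrow> bool) \<Rightarrow> 'v \<Rightarrow> 'v \<Rightarrow> enat" where
  "graph_dist V E a b = (INF n \<in> {n. walk_len V E a b n}. enat n)"

definition graph_diam :: "'v set \<Rightarrow> ('v \<Rightarrow> 'v \<Rightarrow> bool) \<Rightarrow> enat" where
  "graph_diam V E = (SUP a \<in> V. SUP b \<in> V. graph_dist V E a b)"

definition is_divisor_graph :: "'v set \<Rightarrow> ('v \<Rightarrow> 'v \<Rightarrow> bool) \<Rightarrow> bool" where
  "is_divisor_graph V E \<longleftrightarrow> (\<exists>(T :: nat set) f. T \<noteq> {} \<and> (\<forall>t\<in>T. 0 < t) \<and> bij_betw f V T \<and>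
      (\<forall>a\<in>V. \<forall>b\<in>V. a \<noteq> b \<longrightarrow> (E a b \<longleftrightarrow> (f a dvd f b \<or> f b dvd f a))))"

end

theory Submission
  imports Defs
begin

text \<open>A diameter-one zero divisor graph has an edge, i.e. elements
  \<open>a\<^sub>i, b\<^sub>i \<noteq> 0\<close> of \<open>R\<^sub>i\<close> with \<open>a\<^sub>i b\<^sub>i = 0\<close>. In the complement graph of \<open>R\<^sub>1 \<times> R\<^sub>2\<close> the seven
  vertices \<open>(0,1), (0,a\<^sub>2), (1,0), (1,b\<^sub>2), (a\<^sub>1,0), (b\<^sub>1,1), (b\<^sub>1,b\<^sub>2)\<close> induce a graph
  with an odd cycle of forced orientations: if \<open>x\<close> and \<open>z\<close> are incomparable neighbours
  of \<open>y\<close> in a comparability graph, then \<open>y\<close> lies above both or below both. Going once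
  round the cycle reverses the orientation of the edge \<open>(0,1)\<close>--\<open>(0,a\<^sub>2)\<close>, which is
  impossible in the divisibility order.\<close>

lemma Inf_subset_singleton_enat:
  fixes S :: "enat set"
  assumes "S \<subseteq> {x}"
  shows "Inf S \<in> {x, \<infinity>}"
proof (cases "S = {}")
  case False
  with assms have "S = {x}" by blast
  then show ?thesis by simp
qed (simp add: top_enat_def)

lemma Sup_subset_zero_infinity_enat:
  fixes S :: "enat set"
  assumes "S \<subseteq> {0, \<infinity>}"
  shows "Sup S \<in> {0, \<infinity>}"
proof (cases "\<infinity> \<in> S")
  case True
  then have "\<infinity> \<le> Sup S" by (rule Sup_upper)
  then show ?thesis by (simp add: order_antisym)
next
  case False
  with assms have "S \<subseteq> {0}" by blast
  then show ?thesis by (auto simp: subset_singleton_iff bot_enat_def)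
qed

lemma walk_len_no_edges:
  assumes "\<not> (\<exists>a\<in>V. \<exists>b\<in>V. E a b)" and "walk_len V E a b n"
  shows "n = 0 \<and> a = b"
proof -
  obtain p where p: "p 0 = a" "p n = b" "\<forall>i\<le>n. p i \<in> V" "\<forall>i<n. E (p i) (p (Suc i))"
    using assms(2) unfolding walk_len_def by blast
  show ?thesis
  proof (cases n)
    case (Suc m)
    then have "E (p 0) (p 1)" "p 0 \<in> V" "p 1 \<in> V" using p by auto
    with assms(1) show ?thesis by blast
  qed (use p in simp)
qed

lemma graph_diam_eq_1_imp_edge:
  assumes "graph_diam V E = 1"
  shows "\<exists>a\<in>V. \<exists>b\<in>V. E a b"
proof (rule ccontr)
  assume no_edges: "\<not> (\<exists>a\<in>V. \<exists>b\<in>V. E a b)"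
  have "graph_dist V E a b \<in> {0, \<infinity>}" for a b
  proof -
    have "enat ` {n. walk_len V E a b n} \<subseteq> {0}"
      using walk_len_no_edges[OF no_edges] by (auto simp: zero_enat_def)
    then show ?thesis
      unfolding graph_dist_def using Inf_subset_singleton_enat by blast
  qed
  then have "graph_diam V E \<in> {0, \<infinity>}"
    unfolding graph_diam_def by (intro Sup_subset_zero_infinity_enat image_subsetI)
  with assms show False by (simp add: one_enat_def zero_enat_def)
qed

lemma zero_divisor_pair_if_zdg_diam_eq_1:
  assumes "graph_diam (zdg_vertices R) (zdg_adj R) = 1"
  obtains a b where "a \<in> carrier R" "b \<in> carrier R" "a \<noteq> \<zero>\<^bsub>R\<^esub>" "b \<noteq> \<zero>\<^bsub>R\<^esub>"
    "a \<otimes>\<^bsub>R\<^esub> b = \<zero>\<^bsub>R\<^esub>"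
  using graph_diam_eq_1_imp_edge[OF assms]
  unfolding zdg_vertices_def zero_divisors_def zdg_adj_def by blast

lemma RDirProd_mult [simp]:
  "(a, b) \<otimes>\<^bsub>RDirProd R S\<^esub> (c, d) = (a \<otimes>\<^bsub>R\<^esub> c, b \<otimes>\<^bsub>S\<^esub> d)"
  by (simp add: RDirProd_def DirProd_def monoid.defs)

lemma RDirProd_zero [simp]: "\<zero>\<^bsub>RDirProd R S\<^esub> = (\<zero>\<^bsub>R\<^esub>, \<zero>\<^bsub>S\<^esub>)"
  by (simp add: RDirProd_def DirProd_def monoid.defs)

lemma zero_divisors_RDirProd:
  assumes "semiring R" and "semiring S"
  shows "zero_divisors (RDirProd R S)
    = zero_divisors R \<times> carrier S \<union> carrier R \<times> zero_divisors S"
proof -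
  interpret R: semiring R by fact
  interpret S: semiring S by fact
  have "p \<in> zero_divisors (RDirProd R S)
      \<longleftrightarrow> p \<in> zero_divisors R \<times> carrier S \<union> carrier R \<times> zero_divisors S" for p
  proof (cases p)
    case (Pair x y)
    have "(\<exists>c\<in>carrier R. \<exists>d\<in>carrier S. (c, d) \<noteq> (\<zero>\<^bsub>R\<^esub>, \<zero>\<^bsub>S\<^esub>)
          \<and> x \<otimes>\<^bsub>R\<^esub> c = \<zero>\<^bsub>R\<^esub> \<and> y \<otimes>\<^bsub>S\<^esub> d = \<zero>\<^bsub>S\<^esub>)
      \<longleftrightarrow> (\<exists>c\<in>carrier R. c \<noteq> \<zero>\<^bsub>R\<^esub> \<and> x \<otimes>\<^bsub>R\<^esub> c = \<zero>\<^bsub>R\<^esub>)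
        \<or> (\<exists>d\<in>carrier S. d \<noteq> \<zero>\<^bsub>S\<^esub> \<and> y \<otimes>\<^bsub>S\<^esub> d = \<zero>\<^bsub>S\<^esub>)"
      if "x \<in> carrier R" "y \<in> carrier S"
      using that by (metis R.r_null R.zero_closed S.r_null S.zero_closed prod.inject)
    then show ?thesis
      using Pair unfolding zero_divisors_def RDirProd_carrier by auto
  qed
  then show ?thesis by blast
qed

definition comparable :: "('a \<Rightarrow> 'a \<Rightarrow> bool) \<Rightarrow> 'a \<Rightarrow> 'a \<Rightarrow> bool" where
  "comparable r x y \<longleftrightarrow> r x y \<or> r y x"

lemma comparable_sym: "comparable r x y \<longleftrightarrow> comparable r y x"
  by (auto simp: comparable_def)

lemma comparable_conversep [simp]: "comparable r\<inverse>\<inverse> = comparable r"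
  by (auto simp: comparable_def fun_eq_iff)

lemma forced_below:
  assumes "transp r" "comparable r y z" "\<not> comparable r x z" "r x y"
  shows "r z y"
  using assms by (auto simp: comparable_def dest: transpD)

lemma forced_above:
  assumes "transp r" "comparable r y z" "\<not> comparable r x z" "r y x"
  shows "r y z"
  using assms by (auto simp: comparable_def dest: transpD)

text \<open>The comparable pairs of \<open>y\<^sub>1, \<dots>, y\<^sub>7\<close> are the edges of the induced subgraph on the seven
  vertices listed above, in that order.\<close>

definition forcing_heptagon ::
    "('a \<Rightarrow> 'a \<Rightarrow> bool) \<Rightarrow> 'a \<Rightarrow> 'a \<Rightarrow> 'a \<Rightarrow> 'a \<Rightarrow> 'a \<Rightarrow> 'a \<Rightarrow> 'a \<Rightarrow> bool" where
  "forcing_heptagon r y1 y2 y3 y4 y5 y6 y7 \<longleftrightarrow>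
     comparable r y1 y2 \<and> comparable r y1 y4 \<and> comparable r y4 y5 \<and> comparable r y4 y6 \<and>
     comparable r y2 y6 \<and> comparable r y3 y6 \<and> comparable r y3 y5 \<and> comparable r y3 y7 \<and>
     comparable r y1 y7 \<and>
     \<not> comparable r y2 y4 \<and> \<not> comparable r y1 y5 \<and> \<not> comparable r y5 y6 \<and>
     \<not> comparable r y2 y3 \<and> \<not> comparable r y5 y7 \<and> \<not> comparable r y1 y3 \<and>
     \<not> comparable r y2 y7"

lemma forcing_heptagon_conversep [simp]:
  "forcing_heptagon r\<inverse>\<inverse> = forcing_heptagon r"
  by (simp add: forcing_heptagon_def fun_eq_iff)

lemma forcing_heptagon_reverse:
  assumes r: "transp r" and H: "forcing_heptagon r y1 y2 y3 y4 y5 y6 y7"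
    and "r y2 y1"
  shows "r y1 y2"
proof -
  note H = H[unfolded forcing_heptagon_def] comparable_sym[of r]
  have "r y4 y1" using forced_below[OF r, of y1 y4 y2] H \<open>r y2 y1\<close> by blast
  then have "r y4 y5" using forced_above[OF r, of y4 y5 y1] H by blast
  then have "r y4 y6" using forced_above[OF r, of y4 y6 y5] H by blast
  then have "r y2 y6" using forced_below[OF r, of y6 y2 y4] H by blast
  then have "r y3 y6" using forced_below[OF r, of y6 y3 y2] H by blast
  then have "r y3 y5" using forced_above[OF r, of y3 y5 y6] H by blast
  then have "r y3 y7" using forced_above[OF r, of y3 y7 y5] H by blast
  then have "r y1 y7" using forced_below[OF r, of y7 y1 y3] H by blast
  then show "r y1 y2" using forced_above[OF r, of y1 y2 y7] H by blast
qed

lemma forcing_heptagon_eq: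
  assumes "transp r" "antisymp r" "forcing_heptagon r y1 y2 y3 y4 y5 y6 y7"
  shows "y1 = y2"
proof -
  have "r y1 y2 \<or> r y2 y1"
    using assms(3) by (simp add: forcing_heptagon_def comparable_def)
  moreover have "r y2 y1 \<Longrightarrow> r y1 y2"
    using forcing_heptagon_reverse[OF assms(1,3)] .
  moreover have "r y1 y2 \<Longrightarrow> r y2 y1"
    using forcing_heptagon_reverse[of "r\<inverse>\<inverse>"] assms(1,3) by simp
  ultimately show ?thesis using assms(2) by (auto dest: antisympD)
qed

lemma not_divisor_graph_if_forcing_heptagon:
  assumes "set [x1, x2, x3, x4, x5, x6, x7] \<subseteq> V" and "distinct [x1, x2, x3, x4, x5, x6, x7]"
    and "forcing_heptagon E x1 x2 x3 x4 x5 x6 x7"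
  shows "\<not> is_divisor_graph V E"
proof
  assume "is_divisor_graph V E"
  then obtain f :: "'a \<Rightarrow> nat" where inj: "inj_on f V"
    and adj: "\<And>u v. u \<in> V \<Longrightarrow> v \<in> V \<Longrightarrow> u \<noteq> v \<Longrightarrow> E u v \<longleftrightarrow> comparable (dvd) (f u) (f v)"
    unfolding is_divisor_graph_def bij_betw_def comparable_def by blast
  have comp: "comparable E u v \<longleftrightarrow> comparable (dvd) (f u) (f v)"
    if "u \<in> V" "v \<in> V" "u \<noteq> v" for u v
    using adj[OF that] adj[OF that(2,1) that(3)[symmetric]] by (auto simp: comparable_def)
  have "forcing_heptagon (dvd) (f x1) (f x2) (f x3) (f x4) (f x5) (f x6) (f x7)"
    using assms by (simp add: forcing_heptagon_def comp[symmetric])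
  then have "f x1 = f x2"
    by (rule forcing_heptagon_eq[rotated 2]) (auto intro: transpI antisympI dvd_trans dvd_antisym)
  with inj assms(1,2) show False by (auto dest: inj_onD)
qed

lemma compl_zdg_RDirProd_forcing_heptagon:
  assumes "cring R1" "cring R2"
    and a1: "a1 \<in> carrier R1" "a1 \<noteq> \<zero>\<^bsub>R1\<^esub>" and b1: "b1 \<in> carrier R1" "b1 \<noteq> \<zero>\<^bsub>R1\<^esub>"
    and ab1: "a1 \<otimes>\<^bsub>R1\<^esub> b1 = \<zero>\<^bsub>R1\<^esub>"
    and a2: "a2 \<in> carrier R2" "a2 \<noteq> \<zero>\<^bsub>R2\<^esub>" and b2: "b2 \<in> carrier R2" "b2 \<noteq> \<zero>\<^bsub>R2\<^esub>"
    and ab2: "a2 \<otimes>\<^bsub>R2\<^esub> b2 = \<zero>\<^bsub>R2\<^esub>"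
  defines "xs \<equiv> [(\<zero>\<^bsub>R1\<^esub>, \<one>\<^bsub>R2\<^esub>), (\<zero>\<^bsub>R1\<^esub>, a2), (\<one>\<^bsub>R1\<^esub>, \<zero>\<^bsub>R2\<^esub>), (\<one>\<^bsub>R1\<^esub>, b2),
      (a1, \<zero>\<^bsub>R2\<^esub>), (b1, \<one>\<^bsub>R2\<^esub>), (b1, b2)]"
  shows "set xs \<subseteq> zdg_vertices (RDirProd R1 R2)" and "distinct xs"
    and "forcing_heptagon (zdg_compl_adj (RDirProd R1 R2)) (\<zero>\<^bsub>R1\<^esub>, \<one>\<^bsub>R2\<^esub>) (\<zero>\<^bsub>R1\<^esub>, a2)
      (\<one>\<^bsub>R1\<^esub>, \<zero>\<^bsub>R2\<^esub>) (\<one>\<^bsub>R1\<^esub>, b2) (a1, \<zero>\<^bsub>R2\<^esub>) (b1, \<one>\<^bsub>R2\<^esub>) (b1, b2)"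
proof -
  interpret A: cring R1 by fact
  interpret B: cring R2 by fact
  have ba1: "b1 \<otimes>\<^bsub>R1\<^esub> a1 = \<zero>\<^bsub>R1\<^esub>" and ba2: "b2 \<otimes>\<^bsub>R2\<^esub> a2 = \<zero>\<^bsub>R2\<^esub>"
    using ab1 ab2 a1 b1 a2 b2 by (simp_all add: A.m_comm B.m_comm)
  have ne1: "\<one>\<^bsub>R1\<^esub> \<noteq> \<zero>\<^bsub>R1\<^esub>" "a1 \<noteq> \<one>\<^bsub>R1\<^esub>" "b1 \<noteq> \<one>\<^bsub>R1\<^esub>"
    using a1 b1 ab1 by (metis A.r_one A.r_null, metis A.l_one, metis A.r_one)
  have ne2: "\<one>\<^bsub>R2\<^esub> \<noteq> \<zero>\<^bsub>R2\<^esub>" "a2 \<noteq> \<one>\<^bsub>R2\<^esub>" "b2 \<noteq> \<one>\<^bsub>R2\<^esub>"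
    using a2 b2 ab2 by (metis B.r_one B.r_null, metis B.l_one, metis B.r_one)
  note ne = a1(2) b1(2) a2(2) b2(2) ne1 ne2
  have "\<zero>\<^bsub>R1\<^esub> \<in> zero_divisors R1" "a1 \<in> zero_divisors R1" "b1 \<in> zero_divisors R1"
    and "\<zero>\<^bsub>R2\<^esub> \<in> zero_divisors R2" "a2 \<in> zero_divisors R2" "b2 \<in> zero_divisors R2"
    using a1 b1 ab1 ba1 a2 b2 ab2 ba2 unfolding zero_divisors_def by auto
  then show "set xs \<subseteq> zdg_vertices (RDirProd R1 R2)"
    using a1 b1 a2 b2 ne1 ne2 unfolding xs_def
    by (simp add: zdg_vertices_def zero_divisors_RDirProd[OF A.semiring_axioms B.semiring_axioms])
  show "distinct xs"
    using ne ne[THEN not_sym] unfolding xs_def by auto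
  show "forcing_heptagon (zdg_compl_adj (RDirProd R1 R2)) (\<zero>\<^bsub>R1\<^esub>, \<one>\<^bsub>R2\<^esub>) (\<zero>\<^bsub>R1\<^esub>, a2)
      (\<one>\<^bsub>R1\<^esub>, \<zero>\<^bsub>R2\<^esub>) (\<one>\<^bsub>R1\<^esub>, b2) (a1, \<zero>\<^bsub>R2\<^esub>) (b1, \<one>\<^bsub>R2\<^esub>) (b1, b2)"
    using a1 b1 ab1 ba1 a2 b2 ab2 ba2 ne ne[THEN not_sym]
    by (simp add: forcing_heptagon_def comparable_def zdg_compl_adj_def)
qed

theorem theorem2p4:
  fixes R1 :: "('a, 'm) ring_scheme" and R2 :: "('b, 'n) ring_scheme"
  assumes "principal_ideal_ring R1" and "principal_ideal_ring R2"
    and "finite (carrier R1)" and "finite (carrier R2)"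
    and "graph_diam (zdg_vertices R1) (zdg_adj R1) = 1"
    and "graph_diam (zdg_vertices R2) (zdg_adj R2) = 1"
  shows "\<not> is_divisor_graph (zdg_vertices (RDirProd R1 R2)) (zdg_compl_adj (RDirProd R1 R2))"
proof -
  have "cring R1" "cring R2"
    using assms(1,2) by (simp_all add: principal_ideal_ring_def)
  obtain a1 b1 where pair1: "a1 \<in> carrier R1" "a1 \<noteq> \<zero>\<^bsub>R1\<^esub>" "b1 \<in> carrier R1" "b1 \<noteq> \<zero>\<^bsub>R1\<^esub>"
    "a1 \<otimes>\<^bsub>R1\<^esub> b1 = \<zero>\<^bsub>R1\<^esub>"
    using zero_divisor_pair_if_zdg_diam_eq_1[OF assms(5)] .
  obtain a2 b2 where pair2: "a2 \<in> carrier R2" "a2 \<noteq> \<zero>\<^bsub>R2\<^esub>" "b2 \<in> carrier R2" "b2 \<noteq> \<zero>\<^bsub>R2\<^esub>"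
    "a2 \<otimes>\<^bsub>R2\<^esub> b2 = \<zero>\<^bsub>R2\<^esub>"
    using zero_divisor_pair_if_zdg_diam_eq_1[OF assms(6)] .
  note heptagon = compl_zdg_RDirProd_forcing_heptagon[OF \<open>cring R1\<close> \<open>cring R2\<close> pair1 pair2]
  show ?thesis
    by (rule not_divisor_graph_if_forcing_heptagon[OF heptagon])
qed

end
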